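(* Consider the system described in the context and assume (H1) and (H2). Then every steady state of the system is of one of the following nine types ($i\in\{1,2\}$), with components listed as $(S_1^1,X_1^1,S_2^1,X_2^1\mid S_1^2,X_1^2,S_2^2,X_2^2)$, and each type exists if and only if the stated existence condition holds: \begin{enumerate} \item $\mathcal{E}_{00}^{00}=(S_1^{\mathrm{in}},0,S_2^{\mathrm{in}},0\mid S_1^{\mathrm{in}},0,S_2^{\mathrm{in}},0)$; always exists. \item $\mathcal{E}_{00}^{0i}=\bigl(S_1^{\mathrm{in}},0,S_2^{\mathrm{in}},0\mid S_1^{\mathrm{in}},0,\lambda_2^{2i},\tfrac{S_2^{\mathrm{in}}-\lambda_2^{2i}}{\alpha k_3}\bigr)$; exists iff $S_2^{\mathrm{in}}>\lambda_2^{2i}$. \item $\mathcal{E}_{00}^{10}=\bigl(S_1^{\mathrm{in}},0,S_2^{\mathrm{in}},0\mid \lambda_1^2,\tfrac{S_1^{\mathrm{in}}-\lambda_1^2}{\alpha k_1},S_2^{\mathrm{in}}+\tfrac{k_2}{k_1}(S_1^{\mathrm{in}}-\lambda_1^2),0\bigr)$; exists iff $S_1^{\mathrm{in}}>\lambda_1^2$. \item $\mathcal{E}_{00}^{1i}=\bigl(S_1^{\mathrm{in}},0,S_2^{\mathrm{in}},0\mid \lambda_1^2,\tfrac{S_1^{\mathrm{in}}-\lambda_1^2}{\alpha k_1},\lambda_2^{2i},\tfrac{k_2(S_1^{\mathrm{in}}-F_{2i})}{\alpha k_1k_3}\bigr)$; exists iff $S_1^{\mathrm{in}}>\max(\lambda_1^2,F_{2i})$.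 \item $\mathcal{E}_{10}^{10}=\bigl(\lambda_1^1,X_1^{1*},S_2^{\mathrm{in}}+\tfrac{k_2}{k_1}(S_1^{\mathrm{in}}-\lambda_1^1),0\mid S_1^{\mathrm{in}}-\alpha k_1X_1^{2*},X_1^{2*},S_2^{\mathrm{in}}+\alpha k_2X_1^{2*},0\bigr)$; exists iff $S_1^{\mathrm{in}}>\lambda_1^1$. \item $\mathcal{E}_{10}^{1i}=\bigl(\lambda_1^1,X_1^{1*},S_2^{\mathrm{in}}+\tfrac{k_2}{k_1}(S_1^{\mathrm{in}}-\lambda_1^1),0\mid S_1^{\mathrm{in}}-\alpha k_1X_1^{2*},X_1^{2*},\lambda_2^{2i},\tfrac{\phi_i}{\alpha k_3}\bigr)$; exists iff $S_1^{\mathrm{in}}>\lambda_1^1$ and $\phi_i>0$. \item $\mathcal{E}_{0i}^{01}=\bigl(S_1^{\mathrm{in}},0,\lambda_2^{1i},\tfrac{S_2^{\mathrm{in}}-\lambda_2^{1i}}{\alpha k_3}\mid S_1^{\mathrm{in}},0,S_2^{\mathrm{in}}-\alpha k_3X_2^{2*},X_2^{2*}\bigr)$, where $X_2^{2*}$ is a solution of $f_2(x)=g_2(x)$ built with $S_2^{1*}=\lambda_2^{1i}$, $X_1^{1*}=0$, $X_1^{2*}=0$, $X_2^{1*}=\tfrac{S_2^{\mathrm{in}}-\lambda_2^{1i}}{\alpha k_3}$; exists iff $S_2^{\mathrm{in}}>\lambda_2^{1i}$. \item $\mathcal{E}_{0i}^{11}=\bigl(S_1^{\mathrm{in}},0,\lambda_2^{1i},\tfrac{S_2^{\mathrm{in}}-\lambda_2^{1i}}{\alpha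 k_3}\mid \lambda_1^2,\tfrac{S_1^{\mathrm{in}}-\lambda_1^2}{\alpha k_1},\tfrac{k_2}{k_1}(S_1^{\mathrm{in}}-\lambda_1^2)+S_2^{\mathrm{in}}-\alpha k_3X_2^{2*},X_2^{2*}\bigr)$, where $X_2^{2*}$ is a solution of $f_2(x)=g_2(x)$ built with $S_2^{1*}=\lambda_2^{1i}$, $X_1^{1*}=0$, $X_1^{2*}=\tfrac{S_1^{\mathrm{in}}-\lambda_1^2}{\alpha k_1}$, $X_2^{1*}=\tfrac{S_2^{\mathrm{in}}-\lambda_2^{1i}}{\alpha k_3}$; exists iff $S_1^{\mathrm{in}}>\lambda_1^2$ and $S_2^{\mathrm{in}}>\lambda_2^{1i}$. \item $\mathcal{E}_{1i}^{11}=\bigl(\lambda_1^1,X_1^{1*},\lambda_2^{1i},\tfrac{k_2(S_1^{\mathrm{in}}-F_{1i})}{\alpha k_1k_3}\mid S_1^{\mathrm{in}}-\alpha k_1X_1^{2*},X_1^{2*},S_2^{\mathrm{in}}+\alpha k_2X_1^{2*}-\alpha k_3X_2^{2*},X_2^{2*}\bigr)$, where $X_2^{2*}$ is a solution of $f_2(x)=g_2(x)$ built with $S_2^{1*}=\lambda_2^{1i}$, $X_1^{1*}=\tfrac{S_1^{\mathrm{in}}-\lambda_1^1}{\alpha k_1}$, $X_1^{2*}$ as defined in the context, $X_2^{1*}=\tfrac{k_2(S_1^{\mathrm{in}}-F_{1i})}{\alpha k_1k_3}$; exists iff $S_1^{\mathrm{in}}>\max(\lambda_1^1,F_{1i})$.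 \end{enumerate}
   Context: Consider the system of ODEs for $\xi=(S_1^1,X_1^1,S_2^1,X_2^1,S_1^2,X_1^2,S_2^2,X_2^2)\in\mathbb{R}_+^8$: $\dot S_1^1=D_1(S_1^{\mathrm{in}}-S_1^1)-k_1\mu_1(S_1^1)X_1^1$, $\dot X_1^1=(\mu_1(S_1^1)-\alpha D_1)X_1^1$, $\dot S_2^1=D_1(S_2^{\mathrm{in}}-S_2^1)+k_2\mu_1(S_1^1)X_1^1-k_3\mu_2(S_2^1)X_2^1$, $\dot X_2^1=(\mu_2(S_2^1)-\alpha D_1)X_2^1$, $\dot S_1^2=D_2(S_1^1-S_1^2)-k_1\mu_1(S_1^2)X_1^2$, $\dot X_1^2=\alpha D_2(X_1^1-X_1^2)+\mu_1(S_1^2)X_1^2$, $\dot S_2^2=D_2(S_2^1-S_2^2)+k_2\mu_1(S_1^2)X_1^2-k_3\mu_2(S_2^2)X_2^2$, $\dot X_2^2=\alpha D_2(X_2^1-X_2^2)+\mu_2(S_2^2)X_2^2$. Here $D>0$, $r\in(0,1)$, $r_1=r$, $r_2=1-r$, $D_i=D/r_i$, $\alpha\in(0,1)$, $k_1,k_2,k_3>0$, $S_1^{\mathrm{in}},S_2^{\mathrm{in}}>0$. The functions $\mu_1,\mu_2\in\mathcal C^1(\mathbb R_+)$ satisfy (H1): $\mu_1(0)=0$, $\lim_{s\to\infty}\mu_1(s)=m_1$, $\mu_1'(s)>0$ for $s>0$; (H2): $\mu_2(0)=0$, $\lim_{s\to\infty}\mu_2(s)=0$, and there is $S_2^{\mathrm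 m}>0$ with $\mu_2'>0$ on $(0,S_2^{\mathrm m})$ and $\mu_2'<0$ on $(S_2^{\mathrm m},\infty)$. Notation ($i,j\in\{1,2\}$): $\lambda_1^i$ is the unique solution of $\mu_1(S)=\alpha D_i$ when $D<r_im_1/\alpha$, and $\lambda_1^i=+\infty$ otherwise; $\lambda_2^{i1}<\lambda_2^{i2}$ are the two solutions of $\mu_2(S)=\alpha D_i$ when $D\le r_i\mu_2(S_2^{\mathrm m})/\alpha$, and $+\infty$ otherwise; $F_{ij}=\lambda_1^i+\frac{k_1}{k_2}(\lambda_2^{ij}-S_2^{\mathrm{in}})$. When $S_1^{\mathrm{in}}>\lambda_1^1$, put $X_1^{1*}=(S_1^{\mathrm{in}}-\lambda_1^1)/(\alpha k_1)$, $f_1(x)=\mu_1(S_1^{\mathrm{in}}-\alpha k_1x)$ on $[0,S_1^{\mathrm{in}}/(\alpha k_1)]$, $g_1(x)=\alpha D_2(x-X_1^{1*})/x$, and let $X_1^{2*}$ be the unique solution of $f_1(x)=g_1(x)$ in $(X_1^{1*},S_1^{\mathrm{in}}/(\alpha k_1))$; set $\phi_j=S_2^{\mathrm{in}}+\alpha k_2X_1^{2*}-\lambda_2^{2j}$. Given numbers $S_2^{1*},X_1^{1*},X_2^{1*},X_1^{2*}$ (specified in each case), define $g_2(x)=\alpha D_2(x-X_2^{1*})/x$ on $(0,\infty)$ and $f_2(x)=\mu_2\bigl(S_2^{1*}-\alpha k_2(X_1^{1*}-X_1^{2*})+\alpha k_3(X_2^{1*}-x)\bigr)$ on $[0,d]$,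 $d=X_2^{1*}+(S_2^{1*}-\alpha k_2(X_1^{1*}-X_1^{2*}))/(\alpha k_3)$. *)

theory Defs
  imports Complex_Main "HOL-Library.Extended_Real"
begin

text \<open>Parameters of the two-compartment chemostat model.  pm1 is the limit m_1 of mu_1,
  pS2m the maximiser S_2^m of mu_2 from (H2).\<close>

record chemo =
  pD :: real
  pr :: real
  palpha :: real
  pk1 :: real
  pk2 :: real
  pk3 :: real
  pS1in :: real
  pS2in :: real
  pmu1 :: "real \<Rightarrow> real"
  pmu2 :: "real \<Rightarrow> real"
  pm1 :: real
  pS2m :: real

text \<open>States: (S_1^1, X_1^1, S_2^1, X_2^1, S_1^2, X_1^2, S_2^2, X_2^2).\<close>
type_synonym state = "real \<times> real \<times> real \<times> real \<times> real \<times> real \<times> real \<times> real"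

definition H1 :: "(real \<Rightarrow> real) \<Rightarrow> real \<Rightarrow> bool" where
  "H1 mu m \<longleftrightarrow> mu 0 = 0 \<and> (mu \<longlongrightarrow> m) at_top \<and>
     (\<exists>mu'. continuous_on {0..} mu' \<and>
        (\<forall>s\<ge>0. (mu has_real_derivative mu' s) (at s within {0..})) \<and>
        (\<forall>s>0. mu' s > 0))"

definition H2 :: "(real \<Rightarrow> real) \<Rightarrow> real \<Rightarrow> bool" where
  "H2 mu Sm \<longleftrightarrow> Sm > 0 \<and> mu 0 = 0 \<and> (mu \<longlongrightarrow> 0) at_top \<and>
     (\<exists>mu'. continuous_on {0..} mu' \<and>
        (\<forall>s\<ge>0. (mu has_real_derivative mu' s) (at s within {0..})) \<and>
        (\<forall>s. 0 < s \<and> s < Sm \<longrightarrow> mu' s > 0) \<and>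
        (\<forall>s. Sm < s \<longrightarrow> mu' s < 0))"

definition rr :: "chemo \<Rightarrow> nat \<Rightarrow> real" where
  "rr P i = (if i = 1 then pr P else 1 - pr P)"

definition Dc :: "chemo \<Rightarrow> nat \<Rightarrow> real" where
  "Dc P i = pD P / rr P i"

definition steady :: "chemo \<Rightarrow> state \<Rightarrow> bool" where
  "steady P \<xi> \<longleftrightarrow> (case \<xi> of (S11, X11, S21, X21, S12, X12, S22, X22) \<Rightarrow>
     0 \<le> S11 \<and> 0 \<le> X11 \<and> 0 \<le> S21 \<and> 0 \<le> X21 \<and>
     0 \<le> S12 \<and> 0 \<le> X12 \<and> 0 \<le> S22 \<and> 0 \<le> X22 \<and>
     Dc P 1 * (pS1in P - S11) - pk1 P * pmu1 P S11 * X11 = 0 \<and>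
     (pmu1 P S11 - palpha P * Dc P 1) * X11 = 0 \<and>
     Dc P 1 * (pS2in P - S21) + pk2 P * pmu1 P S11 * X11 - pk3 P * pmu2 P S21 * X21 = 0 \<and>
     (pmu2 P S21 - palpha P * Dc P 1) * X21 = 0 \<and>
     Dc P 2 * (S11 - S12) - pk1 P * pmu1 P S12 * X12 = 0 \<and>
     palpha P * Dc P 2 * (X11 - X12) + pmu1 P S12 * X12 = 0 \<and>
     Dc P 2 * (S21 - S22) + pk2 P * pmu1 P S12 * X12 - pk3 P * pmu2 P S22 * X22 = 0 \<and>
     palpha P * Dc P 2 * (X21 - X22) + pmu2 P S22 * X22 = 0)"

definition lam1 :: "chemo \<Rightarrow> nat \<Rightarrow> ereal" where
  "lam1 P i = (if pD P < rr P i * pm1 P / palpha P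
      then ereal (THE s. 0 \<le> s \<and> pmu1 P s = palpha P * Dc P i) else \<infinity>)"

definition lam2 :: "chemo \<Rightarrow> nat \<Rightarrow> nat \<Rightarrow> ereal" where
  "lam2 P i j = (if pD P \<le> rr P i * pmu2 P (pS2m P) / palpha P
      then ereal (if j = 1
        then (THE s. 0 \<le> s \<and> s \<le> pS2m P \<and> pmu2 P s = palpha P * Dc P i)
        else (THE s. pS2m P \<le> s \<and> pmu2 P s = palpha P * Dc P i))
      else \<infinity>)"

definition l1 :: "chemo \<Rightarrow> nat \<Rightarrow> real" where "l1 P i = real_of_ereal (lam1 P i)"
definition l2 :: "chemo \<Rightarrow> nat \<Rightarrow> nat \<Rightarrow> real" where "l2 P i j = real_of_ereal (lam2 P i j)"

definition FF :: "chemo \<Rightarrow> nat \<Rightarrow> nat \<Rightarrow> ereal" where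
  "FF P i j = lam1 P i + ereal (pk1 P / pk2 P) * (lam2 P i j - ereal (pS2in P))"

text \<open>X_1^{1*}, f_1, g_1, X_1^{2*} (meaningful when S_1^in > lambda_1^1).\<close>
definition X11s :: "chemo \<Rightarrow> real" where
  "X11s P = (pS1in P - l1 P 1) / (palpha P * pk1 P)"

definition f1 :: "chemo \<Rightarrow> real \<Rightarrow> real" where
  "f1 P x = pmu1 P (pS1in P - palpha P * pk1 P * x)"

definition g1 :: "chemo \<Rightarrow> real \<Rightarrow> real" where
  "g1 P x = palpha P * Dc P 2 * (x - X11s P) / x"

definition X12s :: "chemo \<Rightarrow> real" where
  "X12s P = (THE x. X11s P < x \<and> x < pS1in P / (palpha P * pk1 P) \<and> f1 P x = g1 P x)"

definition phi :: "chemo \<Rightarrow> nat \<Rightarrow> ereal" where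
  "phi P j = ereal (pS2in P + palpha P * pk2 P * X12s P) - lam2 P 2 j"

text \<open>f_2, g_2 built from given numbers a = S_2^{1*}, b = X_1^{1*}, c = X_1^{2*}, e = X_2^{1*};
  a solution of f_2(x) = g_2(x) is an x in [0,d] \<inter> (0,oo).\<close>
definition f2 :: "chemo \<Rightarrow> real \<Rightarrow> real \<Rightarrow> real \<Rightarrow> real \<Rightarrow> real \<Rightarrow> real" where
  "f2 P a b c e x = pmu2 P (a - palpha P * pk2 P * (b - c) + palpha P * pk3 P * (e - x))"

definition g2 :: "chemo \<Rightarrow> real \<Rightarrow> real \<Rightarrow> real" where
  "g2 P e x = palpha P * Dc P 2 * (x - e) / x"

definition dd :: "chemo \<Rightarrow> real \<Rightarrow> real \<Rightarrow> real \<Rightarrow> real \<Rightarrow> real" where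
  "dd P a b c e = e + (a - palpha P * pk2 P * (b - c)) / (palpha P * pk3 P)"

definition sol2 :: "chemo \<Rightarrow> real \<Rightarrow> real \<Rightarrow> real \<Rightarrow> real \<Rightarrow> real \<Rightarrow> bool" where
  "sol2 P a b c e x \<longleftrightarrow> 0 < x \<and> x \<le> dd P a b c e \<and> f2 P a b c e x = g2 P e x"

text \<open>Each type requires the lambdas it uses to be finite (so that the
  formula is defined) and the biomass components designated as present by its label to be
  positive (the zero ones are zero by the formula).\<close>

definition E00_00 :: "chemo \<Rightarrow> state \<Rightarrow> bool" where
  "E00_00 P \<xi> \<longleftrightarrow> \<xi> = (pS1in P, 0, pS2in P, 0, pS1in P, 0, pS2in P, 0)"

definition E00_0i :: "chemo \<Rightarrow> nat \<Rightarrow> state \<Rightarrow> bool" where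
  "E00_0i P i \<xi> \<longleftrightarrow> lam2 P 2 i \<noteq> \<infinity> \<and>
     (let X22 = (pS2in P - l2 P 2 i) / (palpha P * pk3 P) in X22 > 0 \<and>
      \<xi> = (pS1in P, 0, pS2in P, 0, pS1in P, 0, l2 P 2 i, X22))"

definition E00_10 :: "chemo \<Rightarrow> state \<Rightarrow> bool" where
  "E00_10 P \<xi> \<longleftrightarrow> lam1 P 2 \<noteq> \<infinity> \<and>
     (let X12 = (pS1in P - l1 P 2) / (palpha P * pk1 P) in X12 > 0 \<and>
      \<xi> = (pS1in P, 0, pS2in P, 0, l1 P 2, X12,
            pS2in P + pk2 P / pk1 P * (pS1in P - l1 P 2), 0))"

definition E00_1i :: "chemo \<Rightarrow> nat \<Rightarrow> state \<Rightarrow> bool" where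
  "E00_1i P i \<xi> \<longleftrightarrow> lam1 P 2 \<noteq> \<infinity> \<and> lam2 P 2 i \<noteq> \<infinity> \<and>
     (let X12 = (pS1in P - l1 P 2) / (palpha P * pk1 P);
          X22 = pk2 P * (pS1in P - real_of_ereal (FF P 2 i)) / (palpha P * pk1 P * pk3 P)
      in X12 > 0 \<and> X22 > 0 \<and>
      \<xi> = (pS1in P, 0, pS2in P, 0, l1 P 2, X12, l2 P 2 i, X22))"

definition E10_10 :: "chemo \<Rightarrow> state \<Rightarrow> bool" where
  "E10_10 P \<xi> \<longleftrightarrow> lam1 P 1 \<noteq> \<infinity> \<and> ereal (pS1in P) > lam1 P 1 \<and>
     X11s P > 0 \<and> X12s P > 0 \<and>
     \<xi> = (l1 P 1, X11s P, pS2in P + pk2 P / pk1 P * (pS1in P - l1 P 1), 0,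
           pS1in P - palpha P * pk1 P * X12s P, X12s P, pS2in P + palpha P * pk2 P * X12s P, 0)"

definition E10_1i :: "chemo \<Rightarrow> nat \<Rightarrow> state \<Rightarrow> bool" where
  "E10_1i P i \<xi> \<longleftrightarrow> lam1 P 1 \<noteq> \<infinity> \<and> ereal (pS1in P) > lam1 P 1 \<and> lam2 P 2 i \<noteq> \<infinity> \<and>
     (let X22 = real_of_ereal (phi P i) / (palpha P * pk3 P) in
      X11s P > 0 \<and> X12s P > 0 \<and> X22 > 0 \<and>
      \<xi> = (l1 P 1, X11s P, pS2in P + pk2 P / pk1 P * (pS1in P - l1 P 1), 0,
            pS1in P - palpha P * pk1 P * X12s P, X12s P, l2 P 2 i, X22))"

definition E0i_01 :: "chemo \<Rightarrow> nat \<Rightarrow> state \<Rightarrow> bool" where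
  "E0i_01 P i \<xi> \<longleftrightarrow> lam2 P 1 i \<noteq> \<infinity> \<and>
     (let X21 = (pS2in P - l2 P 1 i) / (palpha P * pk3 P) in X21 > 0 \<and>
      (\<exists>x. sol2 P (l2 P 1 i) 0 0 X21 x \<and>
        \<xi> = (pS1in P, 0, l2 P 1 i, X21, pS1in P, 0, pS2in P - palpha P * pk3 P * x, x)))"

definition E0i_11 :: "chemo \<Rightarrow> nat \<Rightarrow> state \<Rightarrow> bool" where
  "E0i_11 P i \<xi> \<longleftrightarrow> lam1 P 2 \<noteq> \<infinity> \<and> lam2 P 1 i \<noteq> \<infinity> \<and>
     (let X21 = (pS2in P - l2 P 1 i) / (palpha P * pk3 P);
          X12 = (pS1in P - l1 P 2) / (palpha P * pk1 P) in X21 > 0 \<and> X12 > 0 \<and>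
      (\<exists>x. sol2 P (l2 P 1 i) 0 X12 X21 x \<and>
        \<xi> = (pS1in P, 0, l2 P 1 i, X21, l1 P 2, X12,
              pk2 P / pk1 P * (pS1in P - l1 P 2) + pS2in P - palpha P * pk3 P * x, x)))"

definition E1i_11 :: "chemo \<Rightarrow> nat \<Rightarrow> state \<Rightarrow> bool" where
  "E1i_11 P i \<xi> \<longleftrightarrow> lam1 P 1 \<noteq> \<infinity> \<and> ereal (pS1in P) > lam1 P 1 \<and> lam2 P 1 i \<noteq> \<infinity> \<and>
     (let X21 = pk2 P * (pS1in P - real_of_ereal (FF P 1 i)) / (palpha P * pk1 P * pk3 P) in
      X11s P > 0 \<and> X12s P > 0 \<and> X21 > 0 \<and>
      (\<exists>x. sol2 P (l2 P 1 i) (X11s P) (X12s P) X21 x \<and>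
        \<xi> = (l1 P 1, X11s P, l2 P 1 i, X21,
              pS1in P - palpha P * pk1 P * X12s P, X12s P,
              pS2in P + palpha P * pk2 P * X12s P - palpha P * pk3 P * x, x)))"

end

theory Submission
  imports Defs
begin

(* At a steady state the biomass equations turn each consumption term mu X into a multiple of
   alpha D X, so the substrate equations become conservation laws S + alpha k X = const.  The
   system then splits into the (S_1, X_1)-part, which does not see species 2, and the
   (S_2, X_2)-part, which sees species 1 only through the production term alpha k_2 X_1.  In
   either part the species is absent, present only in the second compartment, or present in
   both.  Where it lives without biomass upstream, mu(S) = alpha D_i fixes S at a break-even
   concentration lambda (one root for the increasing mu_1, two for the unimodal mu_2).  Where it
   lives in both compartments, the second-compartment equation mu(S) X = alpha D_2 (X - X_up)
   asks for a crossing of mu(S(X)) with alpha D_2 (X - X_up) / X; it exists by the intermediate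
   value theorem and is unique for mu_1, where one side decreases and the other increases.  The
   nine types are the combinations of the profiles of the two species. *)

lemma DERIV_atLeast_pos_imp_less:
  fixes f f' :: "real \<Rightarrow> real"
  assumes deriv: "\<And>s. a \<le> s \<Longrightarrow> (f has_real_derivative f' s) (at s within {a..})"
    and pos: "\<And>s. x < s \<Longrightarrow> s < y \<Longrightarrow> 0 < f' s"
    and "a \<le> x" "x < y"
  shows "f x < f y"
proof (rule DERIV_pos_imp_increasing_open[OF \<open>x < y\<close>])
  fix z assume z: "x < z" "z < y"
  have "(f has_real_derivative f' z) (at z within {a<..})"
    using z \<open>a \<le> x\<close> by (intro DERIV_subset[OF deriv]) auto
  then have "(f has_real_derivative f' z) (at z)"
    using z \<open>a \<le> x\<close> by (subst (asm) at_within_open) auto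
  with pos z show "\<exists>l. (f has_real_derivative l) (at z) \<and> 0 < l" by blast
next
  have "continuous_on {a..} f" by (rule DERIV_continuous_on[OF deriv]) simp
  then show "continuous_on {x..y} f" by (rule continuous_on_subset) (use \<open>a \<le> x\<close> in auto)
qed

lemma crossing_exists:
  fixes f g :: "real \<Rightarrow> real"
  assumes "a \<le> b" "continuous_on {a..b} f" "continuous_on {a..b} g"
    and "g a < f a" "f b < g b"
  shows "\<exists>x. a < x \<and> x < b \<and> f x = g x"
proof -
  have "continuous_on {a..b} (\<lambda>x. f x - g x)" using assms(2,3) by (intro continuous_intros)
  then obtain x where x: "a \<le> x" "x \<le> b" "f x - g x = 0"
    using IVT2'[of "\<lambda>x. f x - g x" b 0 a] assms(1,4,5) by auto
  moreover from x assms(4,5) have "x \<noteq> a" "x \<noteq> b" by auto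
  ultimately show ?thesis by (intro exI[of _ x]) auto
qed

lemma unique_crossing:
  fixes f g :: "real \<Rightarrow> real"
  assumes "a \<le> b" "continuous_on {a..b} f" "continuous_on {a..b} g"
    and "g a < f a" "f b < g b"
    and f_dec: "\<And>x y. a \<le> x \<Longrightarrow> x < y \<Longrightarrow> y \<le> b \<Longrightarrow> f y < f x"
    and g_inc: "\<And>x y. a \<le> x \<Longrightarrow> x < y \<Longrightarrow> y \<le> b \<Longrightarrow> g x < g y"
  shows "\<exists>!x. a < x \<and> x < b \<and> f x = g x"
proof (rule ex_ex1I)
  show "\<exists>x. a < x \<and> x < b \<and> f x = g x" by (rule crossing_exists) fact+
next
  have no_two: False if "a < x" "x < y" "y < b" "f x = g x" "f y = g y" for x y
    using f_dec[of x y] g_inc[of x y] that by simp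
  show "x = y" if "a < x \<and> x < b \<and> f x = g x" "a < y \<and> y < b \<and> f y = g y" for x y
    using that no_two[of x y] no_two[of y x] by (cases x y rule: linorder_cases) auto
qed

lemma H1_continuous:
  assumes "H1 mu m" shows "continuous_on {0..} mu"
proof -
  from assms obtain mu' where "\<And>s. 0 \<le> s \<Longrightarrow> (mu has_real_derivative mu' s) (at s within {0..})"
    unfolding H1_def by blast
  then show ?thesis by (rule DERIV_continuous_on) simp
qed

lemma H1_strict_mono:
  assumes "H1 mu m" "0 \<le> x" "x < y" shows "mu x < mu y"
proof -
  from assms(1) obtain mu' where d: "\<And>s. 0 \<le> s \<Longrightarrow> (mu has_real_derivative mu' s) (at s within {0..})"
    and pos: "\<And>s. 0 < s \<Longrightarrow> 0 < mu' s"
    unfolding H1_def by blast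
  show ?thesis
    by (rule DERIV_atLeast_pos_imp_less[OF d pos]) (use assms(2,3) in auto)
qed

lemma H2_continuous:
  assumes "H2 mu Sm" shows "continuous_on {0..} mu"
proof -
  from assms obtain mu' where "\<And>s. 0 \<le> s \<Longrightarrow> (mu has_real_derivative mu' s) (at s within {0..})"
    unfolding H2_def by blast
  then show ?thesis by (rule DERIV_continuous_on) simp
qed

lemma H2_strict_mono:
  assumes "H2 mu Sm" "0 \<le> x" "x < y" "y \<le> Sm" shows "mu x < mu y"
proof -
  from assms(1) obtain mu' where d: "\<And>s. 0 \<le> s \<Longrightarrow> (mu has_real_derivative mu' s) (at s within {0..})"
    and pos: "\<And>s. 0 < s \<Longrightarrow> s < Sm \<Longrightarrow> 0 < mu' s"
    unfolding H2_def by blast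
  show ?thesis
    by (rule DERIV_atLeast_pos_imp_less[OF d pos]) (use assms(2-4) in auto)
qed

lemma H2_strict_antimono:
  assumes "H2 mu Sm" "Sm \<le> x" "x < y" shows "mu y < mu x"
proof -
  from assms(1) obtain mu' where d: "\<And>s. 0 \<le> s \<Longrightarrow> (mu has_real_derivative mu' s) (at s within {0..})"
    and neg: "\<And>s. Sm < s \<Longrightarrow> mu' s < 0" and "0 < Sm"
    unfolding H2_def by blast
  have "- mu x < - mu y"
    by (rule DERIV_atLeast_pos_imp_less[OF DERIV_minus[OF d]])
       (use assms(2,3) \<open>0 < Sm\<close> neg in force)+
  then show ?thesis by simp
qed

locale chemostat =
  fixes P :: chemo
  assumes D_pos: "0 < pD P" and r_pos: "0 < pr P" and r_less_1: "pr P < 1"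
    and alpha_pos: "0 < palpha P"
    and k1_pos: "0 < pk1 P" and k2_pos: "0 < pk2 P" and k3_pos: "0 < pk3 P"
    and S1in_pos: "0 < pS1in P" and S2in_pos: "0 < pS2in P"
    and H1: "H1 (pmu1 P) (pm1 P)" and H2: "H2 (pmu2 P) (pS2m P)"
begin

abbreviation "\<alpha> \<equiv> palpha P"
abbreviation "k1 \<equiv> pk1 P"
abbreviation "k2 \<equiv> pk2 P"
abbreviation "k3 \<equiv> pk3 P"
abbreviation "S1in \<equiv> pS1in P"
abbreviation "S2in \<equiv> pS2in P"
abbreviation "\<mu>1 \<equiv> pmu1 P"
abbreviation "\<mu>2 \<equiv> pmu2 P"

lemma rr_pos: "0 < rr P i"
  using r_pos r_less_1 by (simp add: rr_def)

lemma Dc_pos: "0 < Dc P i"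
  using D_pos rr_pos by (simp add: Dc_def)

lemma alpha_Dc_pos: "0 < \<alpha> * Dc P i"
  using alpha_pos Dc_pos by simp

lemma alpha_k_pos: "0 < \<alpha> * k1" "0 < \<alpha> * k3" "0 < \<alpha> * k1 * k3"
  using alpha_pos k1_pos k3_pos by simp_all

definition steady1 :: "real \<Rightarrow> real \<Rightarrow> real \<Rightarrow> real \<Rightarrow> bool" where
  "steady1 S11 X11 S12 X12 \<longleftrightarrow> 0 \<le> S11 \<and> 0 \<le> X11 \<and> 0 \<le> S12 \<and> 0 \<le> X12 \<and>
     S11 = S1in - \<alpha> * k1 * X11 \<and> S12 = S1in - \<alpha> * k1 * X12 \<and>
     (\<mu>1 S11 - \<alpha> * Dc P 1) * X11 = 0 \<and> \<mu>1 S12 * X12 = \<alpha> * Dc P 2 * (X12 - X11)"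

definition steady2 :: "real \<Rightarrow> real \<Rightarrow> real \<Rightarrow> real \<Rightarrow> real \<Rightarrow> real \<Rightarrow> bool" where
  "steady2 X11 X12 S21 X21 S22 X22 \<longleftrightarrow> 0 \<le> S21 \<and> 0 \<le> X21 \<and> 0 \<le> S22 \<and> 0 \<le> X22 \<and>
     S21 = S2in + \<alpha> * k2 * X11 - \<alpha> * k3 * X21 \<and> S22 = S2in + \<alpha> * k2 * X12 - \<alpha> * k3 * X22 \<and>
     (\<mu>2 S21 - \<alpha> * Dc P 1) * X21 = 0 \<and> \<mu>2 S22 * X22 = \<alpha> * Dc P 2 * (X22 - X21)"

lemma steady_iff_steady12:
  "steady P (S11, X11, S21, X21, S12, X12, S22, X22) \<longleftrightarrow>
     steady1 S11 X11 S12 X12 \<and> steady2 X11 X12 S21 X21 S22 X22"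
proof -
  have D: "Dc P 1 \<noteq> 0" "Dc P 2 \<noteq> 0" using Dc_pos[of 1] Dc_pos[of 2] by simp_all
  have biomass:
    "(\<mu>1 S11 - \<alpha> * Dc P 1) * X11 = 0 \<longleftrightarrow> \<mu>1 S11 * X11 = \<alpha> * Dc P 1 * X11"
    "(\<mu>2 S21 - \<alpha> * Dc P 1) * X21 = 0 \<longleftrightarrow> \<mu>2 S21 * X21 = \<alpha> * Dc P 1 * X21"
    "\<alpha> * Dc P 2 * (X11 - X12) + \<mu>1 S12 * X12 = 0 \<longleftrightarrow> \<mu>1 S12 * X12 = \<alpha> * Dc P 2 * (X12 - X11)"
    "\<alpha> * Dc P 2 * (X21 - X22) + \<mu>2 S22 * X22 = 0 \<longleftrightarrow> \<mu>2 S22 * X22 = \<alpha> * Dc P 2 * (X22 - X21)"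
    by (simp_all add: algebra_simps)
  have substrate:
    "(Dc P 1 * (S1in - S11) - k1 * \<mu>1 S11 * X11 = 0 \<and>
      Dc P 1 * (S2in - S21) + k2 * \<mu>1 S11 * X11 - k3 * \<mu>2 S21 * X21 = 0 \<and>
      Dc P 2 * (S11 - S12) - k1 * \<mu>1 S12 * X12 = 0 \<and>
      Dc P 2 * (S21 - S22) + k2 * \<mu>1 S12 * X12 - k3 * \<mu>2 S22 * X22 = 0) \<longleftrightarrow>
     (S11 = S1in - \<alpha> * k1 * X11 \<and> S12 = S1in - \<alpha> * k1 * X12 \<and>
      S21 = S2in + \<alpha> * k2 * X11 - \<alpha> * k3 * X21 \<and> S22 = S2in + \<alpha> * k2 * X12 - \<alpha> * k3 * X22)"
    if "\<mu>1 S11 * X11 = \<alpha> * Dc P 1 * X11" "\<mu>2 S21 * X21 = \<alpha> * Dc P 1 * X21"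
       "\<mu>1 S12 * X12 = \<alpha> * Dc P 2 * (X12 - X11)" "\<mu>2 S22 * X22 = \<alpha> * Dc P 2 * (X22 - X21)"
  proof -
    from that have eqs:
      "Dc P 1 * (S1in - S11) - k1 * \<mu>1 S11 * X11 = Dc P 1 * (S1in - \<alpha> * k1 * X11 - S11)"
      "Dc P 1 * (S2in - S21) + k2 * \<mu>1 S11 * X11 - k3 * \<mu>2 S21 * X21 =
         Dc P 1 * (S2in + \<alpha> * k2 * X11 - \<alpha> * k3 * X21 - S21)"
      "Dc P 2 * (S11 - S12) - k1 * \<mu>1 S12 * X12 = Dc P 2 * (S11 - \<alpha> * k1 * (X12 - X11) - S12)"
      "Dc P 2 * (S21 - S22) + k2 * \<mu>1 S12 * X12 - k3 * \<mu>2 S22 * X22 =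
         Dc P 2 * (S21 + \<alpha> * k2 * (X12 - X11) - \<alpha> * k3 * (X22 - X21) - S22)"
      by algebra+
    show ?thesis
      by (simp only: eqs mult_eq_0_iff D simp_thms) (auto simp: algebra_simps)
  qed
  show ?thesis
    unfolding steady_def steady1_def steady2_def biomass prod.case using substrate by blast
qed

section \<open>Growth rates and break-even concentrations\<close>

lemma mu1_0: "\<mu>1 0 = 0"
  using H1 by (simp add: H1_def)

lemma mu1_strict_mono: "0 \<le> x \<Longrightarrow> x < y \<Longrightarrow> \<mu>1 x < \<mu>1 y"
  by (rule H1_strict_mono[OF H1])

lemma mu1_mono: "0 \<le> x \<Longrightarrow> x \<le> y \<Longrightarrow> \<mu>1 x \<le> \<mu>1 y"
  using mu1_strict_mono by (cases "x = y") (auto simp: le_less)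

lemma mu1_inj: "0 \<le> x \<Longrightarrow> 0 \<le> y \<Longrightarrow> \<mu>1 x = \<mu>1 y \<Longrightarrow> x = y"
  by (metis linorder_neqE_linordered_idom mu1_strict_mono less_irrefl)

lemma mu1_pos: "0 < s \<Longrightarrow> 0 < \<mu>1 s"
  using mu1_strict_mono[of 0 s] mu1_0 by simp

lemma mu1_less_m1:
  assumes "0 \<le> s" shows "\<mu>1 s < pm1 P"
proof -
  have lim: "(\<mu>1 \<longlongrightarrow> pm1 P) at_top" using H1 by (simp add: H1_def)
  have "\<mu>1 (s + 1) \<le> pm1 P"
    by (rule tendsto_lowerbound[OF lim])
       (use assms in \<open>auto simp: eventually_at_top_linorder intro!: exI[of _ "s + 1"] mu1_mono\<close>)
  then show ?thesis using mu1_strict_mono[of s "s + 1"] assms by simp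
qed

lemma lam1_threshold: "pD P < rr P i * pm1 P / \<alpha> \<longleftrightarrow> \<alpha> * Dc P i < pm1 P"
  using rr_pos[of i] alpha_pos by (simp add: Dc_def field_simps)

lemma lam1_eqI:
  assumes "0 \<le> s" "\<mu>1 s = \<alpha> * Dc P i" shows "lam1 P i = ereal s"
proof -
  have "pD P < rr P i * pm1 P / \<alpha>"
    using mu1_less_m1[OF assms(1)] assms(2) by (simp add: lam1_threshold)
  moreover have "(THE s. 0 \<le> s \<and> \<mu>1 s = \<alpha> * Dc P i) = s"
    using assms mu1_inj by (intro the_equality) auto
  ultimately show ?thesis by (simp add: lam1_def)
qed

lemma lam1_finite:
  assumes "lam1 P i \<noteq> \<infinity>"
  shows "lam1 P i = ereal (l1 P i)" "0 < l1 P i" "\<mu>1 (l1 P i) = \<alpha> * Dc P i"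
proof -
  have "\<alpha> * Dc P i < pm1 P" using assms by (simp add: lam1_def lam1_threshold split: if_splits)
  moreover have "(\<mu>1 \<longlongrightarrow> pm1 P) at_top" using H1 by (simp add: H1_def)
  ultimately have "eventually (\<lambda>x. \<alpha> * Dc P i < \<mu>1 x) at_top"
    by (rule order_tendstoD(1)[rotated])
  then obtain N where N: "\<And>x. N \<le> x \<Longrightarrow> \<alpha> * Dc P i < \<mu>1 x"
    unfolding eventually_at_top_linorder by blast
  define b where "b = max N 0"
  have "\<exists>s. 0 \<le> s \<and> s \<le> b \<and> \<mu>1 s = \<alpha> * Dc P i"
  proof (rule IVT')
    show "\<mu>1 0 \<le> \<alpha> * Dc P i" using mu1_0 alpha_Dc_pos[of i] by simp
    show "\<alpha> * Dc P i \<le> \<mu>1 b" using N[of b] by (simp add: b_def)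
    show "0 \<le> b" by (simp add: b_def)
    show "continuous_on {0..b} \<mu>1"
      by (rule continuous_on_subset[OF H1_continuous[OF H1]]) auto
  qed
  then obtain s where s: "0 \<le> s" "\<mu>1 s = \<alpha> * Dc P i" by blast
  have "s \<noteq> 0" using s mu1_0 alpha_Dc_pos[of i] by auto
  with s lam1_eqI[OF s] show "lam1 P i = ereal (l1 P i)" "0 < l1 P i" "\<mu>1 (l1 P i) = \<alpha> * Dc P i"
    by (simp_all add: l1_def)
qed

lemma lam1_less_iff: "lam1 P i < ereal s \<longleftrightarrow> lam1 P i \<noteq> \<infinity> \<and> l1 P i < s"
  using lam1_finite(1)[of i] by (cases "lam1 P i = \<infinity>") auto

lemma Sm_pos: "0 < pS2m P"
  using H2 by (simp add: H2_def)

lemma mu2_0: "\<mu>2 0 = 0"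
  using H2 by (simp add: H2_def)

lemma mu2_strict_mono: "0 \<le> x \<Longrightarrow> x < y \<Longrightarrow> y \<le> pS2m P \<Longrightarrow> \<mu>2 x < \<mu>2 y"
  by (rule H2_strict_mono[OF H2])

lemma mu2_strict_antimono: "pS2m P \<le> x \<Longrightarrow> x < y \<Longrightarrow> \<mu>2 y < \<mu>2 x"
  by (rule H2_strict_antimono[OF H2])

lemma mu2_le_max: "0 \<le> s \<Longrightarrow> \<mu>2 s \<le> \<mu>2 (pS2m P)"
  using mu2_strict_mono[of s "pS2m P"] mu2_strict_antimono[of "pS2m P" s]
  by (cases s "pS2m P" rule: linorder_cases) auto

lemma mu2_pos:
  assumes "0 < s" shows "0 < \<mu>2 s"
proof (cases "s \<le> pS2m P")
  case True
  then show ?thesis using mu2_strict_mono[of 0 s] mu2_0 assms by simp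
next
  case False
  have "(\<mu>2 \<longlongrightarrow> 0) at_top" using H2 by (simp add: H2_def)
  moreover have "eventually (\<lambda>x. \<mu>2 x \<le> \<mu>2 (s + 1)) at_top"
    unfolding eventually_at_top_linorder
    using False mu2_strict_antimono[of "s + 1"] by (intro exI[of _ "s + 1"]) (auto simp: le_less)
  ultimately have "0 \<le> \<mu>2 (s + 1)" by (rule tendsto_upperbound) simp
  then show ?thesis using mu2_strict_antimono[of s "s + 1"] False by simp
qed

lemma lam2_threshold: "pD P \<le> rr P i * \<mu>2 (pS2m P) / \<alpha> \<longleftrightarrow> \<alpha> * Dc P i \<le> \<mu>2 (pS2m P)"
  using rr_pos[of i] alpha_pos by (simp add: Dc_def field_simps)

lemma lam2_eqI:
  assumes "0 \<le> s" "\<mu>2 s = \<alpha> * Dc P i"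
  shows "s \<le> pS2m P \<Longrightarrow> lam2 P i 1 = ereal s"
    and "pS2m P \<le> s \<Longrightarrow> j \<noteq> 1 \<Longrightarrow> lam2 P i j = ereal s"
  \<comment> \<open>\<open>lam2\<close> treats every index \<open>j \<noteq> 1\<close> like \<open>j = 2\<close>\<close>
proof -
  have defined: "pD P \<le> rr P i * \<mu>2 (pS2m P) / \<alpha>"
    using mu2_le_max[OF assms(1)] assms(2) by (simp add: lam2_threshold)
  show "lam2 P i 1 = ereal s" if "s \<le> pS2m P"
  proof -
    have "(THE s. 0 \<le> s \<and> s \<le> pS2m P \<and> \<mu>2 s = \<alpha> * Dc P i) = s"
      using assms that mu2_strict_mono
      by (intro the_equality) (metis linorder_neqE_linordered_idom less_irrefl)+
    then show ?thesis using defined by (simp add: lam2_def)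
  qed
  show "lam2 P i j = ereal s" if "pS2m P \<le> s" "j \<noteq> 1"
  proof -
    have "(THE s. pS2m P \<le> s \<and> \<mu>2 s = \<alpha> * Dc P i) = s"
      using assms that mu2_strict_antimono
      by (intro the_equality) (metis linorder_neqE_linordered_idom less_irrefl)+
    then show ?thesis using defined that by (simp add: lam2_def)
  qed
qed

lemma lam2_finite:
  assumes "lam2 P i j \<noteq> \<infinity>"
  shows "lam2 P i j = ereal (l2 P i j)" "0 < l2 P i j" "\<mu>2 (l2 P i j) = \<alpha> * Dc P i"
proof -
  have below_max: "\<alpha> * Dc P i \<le> \<mu>2 (pS2m P)"
    using assms by (simp add: lam2_def lam2_threshold split: if_splits)
  have cont: "continuous_on {a..b} \<mu>2" if "0 \<le> a" for a b
    by (rule continuous_on_subset[OF H2_continuous[OF H2]]) (use that in auto)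
  obtain s where s: "0 \<le> s" "\<mu>2 s = \<alpha> * Dc P i" "lam2 P i j = ereal s"
  proof (cases "j = 1")
    case True
    have "\<exists>s. 0 \<le> s \<and> s \<le> pS2m P \<and> \<mu>2 s = \<alpha> * Dc P i"
      using mu2_0 alpha_Dc_pos[of i] below_max Sm_pos by (intro IVT' cont) auto
    with lam2_eqI(1) True that show ?thesis by blast
  next
    case False
    have "(\<mu>2 \<longlongrightarrow> 0) at_top" using H2 by (simp add: H2_def)
    then have "eventually (\<lambda>x. \<mu>2 x < \<alpha> * Dc P i) at_top"
      by (rule order_tendstoD(2)) (rule alpha_Dc_pos)
    then obtain N where N: "\<And>x. N \<le> x \<Longrightarrow> \<mu>2 x < \<alpha> * Dc P i"
      unfolding eventually_at_top_linorder by blast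
    have "\<exists>s. pS2m P \<le> s \<and> s \<le> max N (pS2m P) \<and> \<mu>2 s = \<alpha> * Dc P i"
      using N[of "max N (pS2m P)"] below_max Sm_pos by (intro IVT2' cont) auto
    then obtain s where "pS2m P \<le> s" "\<mu>2 s = \<alpha> * Dc P i" by blast
    with lam2_eqI(2)[of s i j] False Sm_pos that show ?thesis by simp
  qed
  have "s \<noteq> 0" using s mu2_0 alpha_Dc_pos[of i] by auto
  with s show "lam2 P i j = ereal (l2 P i j)" "0 < l2 P i j" "\<mu>2 (l2 P i j) = \<alpha> * Dc P i"
    by (simp_all add: l2_def)
qed

lemma lam2_less_iff: "lam2 P i j < ereal s \<longleftrightarrow> lam2 P i j \<noteq> \<infinity> \<and> l2 P i j < s"
  using lam2_finite(1)[of i j] by (cases "lam2 P i j = \<infinity>") auto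

lemma lam2_root:
  assumes "0 \<le> s" "\<mu>2 s = \<alpha> * Dc P i"
  shows "\<exists>j\<in>{1, 2}. lam2 P i j \<noteq> \<infinity> \<and> l2 P i j = s"
  using lam2_eqI(1)[OF assms] lam2_eqI(2)[OF assms, of 2] by (cases "s \<le> pS2m P") (auto simp: l2_def)

lemma FF_finite:
  assumes "lam1 P i \<noteq> \<infinity>" "lam2 P i j \<noteq> \<infinity>"
  shows "FF P i j = ereal (l1 P i + k1 / k2 * (l2 P i j - S2in))"
  unfolding FF_def lam1_finite(1)[OF assms(1)] lam2_finite(1)[OF assms(2)] by simp

lemma FF_infinite:
  assumes "lam1 P i = \<infinity> \<or> lam2 P i j = \<infinity>" shows "FF P i j = \<infinity>"
proof -
  have "lam1 P i \<noteq> - \<infinity>" by (simp add: lam1_def)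
  moreover have "lam2 P i j \<noteq> - \<infinity>" by (simp add: lam2_def)
  moreover have "ereal (k1 / k2) * \<infinity> = \<infinity>" using k1_pos k2_pos by simp
  ultimately show ?thesis using assms
    by (cases "lam2 P i j") (auto simp: FF_def)
qed

lemma FF_less_iff:
  "FF P i j < ereal s \<longleftrightarrow>
     lam1 P i \<noteq> \<infinity> \<and> lam2 P i j \<noteq> \<infinity> \<and> l1 P i + k1 / k2 * (l2 P i j - S2in) < s"
proof (cases "lam1 P i \<noteq> \<infinity> \<and> lam2 P i j \<noteq> \<infinity>")
  case True
  then show ?thesis by (simp add: FF_finite)
next
  case False
  then have "FF P i j = \<infinity>" by (intro FF_infinite) auto
  with False show ?thesis by auto
qed

lemma phi_finite:
  "lam2 P 2 j \<noteq> \<infinity> \<Longrightarrow> phi P j = ereal (S2in + \<alpha> * k2 * X12s P - l2 P 2 j)"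
  unfolding phi_def by (subst lam2_finite(1)) simp_all

lemma phi_pos_iff: "0 < phi P j \<longleftrightarrow> lam2 P 2 j \<noteq> \<infinity> \<and> l2 P 2 j < S2in + \<alpha> * k2 * X12s P"
  using phi_finite[of j] by (cases "lam2 P 2 j = \<infinity>") (auto simp: phi_def)

section \<open>The second-compartment crossing equations\<close>

lemma X11s_pos: "lam1 P 1 < ereal S1in \<Longrightarrow> 0 < X11s P"
  using alpha_pos k1_pos by (simp add: lam1_less_iff X11s_def)

lemma S1in_minus_X11s: "S1in - \<alpha> * k1 * X11s P = l1 P 1"
  using alpha_pos k1_pos by (simp add: X11s_def)

lemma f1_eq_g1_iff:
  "0 < x \<Longrightarrow> f1 P x = g1 P x \<longleftrightarrow> \<mu>1 (S1in - \<alpha> * k1 * x) * x = \<alpha> * Dc P 2 * (x - X11s P)"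
  by (auto simp: f1_def g1_def eq_divide_eq)

lemma X12s_ex1:
  assumes "lam1 P 1 < ereal S1in"
  shows "\<exists>!x. X11s P < x \<and> x < S1in / (\<alpha> * k1) \<and> f1 P x = g1 P x"
proof -
  define a b where "a = X11s P" and "b = S1in / (\<alpha> * k1)"
  have fin: "lam1 P 1 \<noteq> \<infinity>" "l1 P 1 < S1in" using assms by (simp_all add: lam1_less_iff)
  have "0 < a" using X11s_pos[OF assms] by (simp add: a_def)
  have "a < b"
    using lam1_finite(2)[OF fin(1)] alpha_k_pos(1)
    by (simp add: a_def b_def X11s_def divide_strict_right_mono)
  have f1_a: "f1 P a = \<alpha> * Dc P 1"
    using lam1_finite(3)[OF fin(1)] by (simp add: a_def f1_def S1in_minus_X11s)
  have b: "\<alpha> * k1 * b = S1in" using alpha_pos k1_pos by (simp add: b_def)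
  then have f1_b: "f1 P b = 0" using mu1_0 by (simp add: f1_def)
  have arg_nonneg: "0 \<le> S1in - \<alpha> * k1 * x" if "x \<le> b" for x
    using mult_left_mono[OF that less_imp_le[OF alpha_k_pos(1)]] b by simp
  show ?thesis
    unfolding a_def[symmetric] b_def[symmetric]
  proof (rule unique_crossing)
    show "a \<le> b" using \<open>a < b\<close> by simp
    show "continuous_on {a..b} (f1 P)"
      unfolding f1_def using arg_nonneg
      by (intro continuous_on_compose2[OF H1_continuous[OF H1]] continuous_intros) auto
    show "continuous_on {a..b} (g1 P)"
      unfolding g1_def using \<open>0 < a\<close> by (intro continuous_intros) auto
    show "g1 P a < f1 P a" using f1_a alpha_Dc_pos[of 1] by (simp add: g1_def a_def)
    show "f1 P b < g1 P b"
      using f1_b \<open>0 < a\<close> \<open>a < b\<close> alpha_Dc_pos[of 2] by (simp add: g1_def a_def)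
    show "f1 P y < f1 P x" if "a \<le> x" "x < y" "y \<le> b" for x y
      unfolding f1_def using arg_nonneg[OF that(3)] mult_strict_left_mono[OF that(2) alpha_k_pos(1)]
      by (intro mu1_strict_mono) auto
    show "g1 P x < g1 P y" if "a \<le> x" "x < y" "y \<le> b" for x y
    proof -
      have "a / y < a / x" using \<open>0 < a\<close> that by (intro divide_strict_left_mono) auto
      then have "\<alpha> * Dc P 2 * (1 - a / x) < \<alpha> * Dc P 2 * (1 - a / y)"
        using alpha_Dc_pos[of 2] by (intro mult_strict_left_mono) auto
      then show ?thesis using \<open>0 < a\<close> that by (simp add: g1_def a_def[symmetric] field_simps)
    qed
  qed
qed

lemma X12s_solution:
  assumes "lam1 P 1 < ereal S1in"
  shows "X11s P < X12s P" "\<alpha> * k1 * X12s P < S1in"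
    "\<mu>1 (S1in - \<alpha> * k1 * X12s P) * X12s P = \<alpha> * Dc P 2 * (X12s P - X11s P)"
proof -
  have "X11s P < X12s P \<and> X12s P < S1in / (\<alpha> * k1) \<and> f1 P (X12s P) = g1 P (X12s P)"
    unfolding X12s_def by (rule theI'[OF X12s_ex1[OF assms]])
  with X11s_pos[OF assms] alpha_pos k1_pos f1_eq_g1_iff[of "X12s P"]
  show "X11s P < X12s P" "\<alpha> * k1 * X12s P < S1in"
    "\<mu>1 (S1in - \<alpha> * k1 * X12s P) * X12s P = \<alpha> * Dc P 2 * (X12s P - X11s P)"
    by (simp_all add: pos_less_divide_eq mult.commute)
qed

lemma X12s_unique:
  assumes "lam1 P 1 < ereal S1in" "X11s P < x" "\<alpha> * k1 * x < S1in"
    and "\<mu>1 (S1in - \<alpha> * k1 * x) * x = \<alpha> * Dc P 2 * (x - X11s P)"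
  shows "x = X12s P"
  unfolding X12s_def using assms X11s_pos[OF assms(1)] alpha_pos k1_pos f1_eq_g1_iff[of x]
  by (intro the1_equality[OF X12s_ex1[OF assms(1)], symmetric]) (simp add: pos_less_divide_eq mult.commute)

lemma sol2_iff:
  "sol2 P a b c e x \<longleftrightarrow> 0 < x \<and> 0 \<le> a - \<alpha> * k2 * (b - c) + \<alpha> * k3 * (e - x) \<and>
     \<mu>2 (a - \<alpha> * k2 * (b - c) + \<alpha> * k3 * (e - x)) * x = \<alpha> * Dc P 2 * (x - e)"
proof -
  have "x \<le> dd P a b c e \<longleftrightarrow> 0 \<le> a - \<alpha> * k2 * (b - c) + \<alpha> * k3 * (e - x)"
    using alpha_pos k3_pos by (simp add: dd_def field_simps)
  then show ?thesis by (auto simp: sol2_def f2_def g2_def eq_divide_eq)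
qed

lemma sol2_exists:
  assumes "0 < e" "0 < a - \<alpha> * k2 * (b - c)" shows "\<exists>x. sol2 P a b c e x"
proof -
  define d where "d = dd P a b c e"
  have arg: "a - \<alpha> * k2 * (b - c) + \<alpha> * k3 * (e - x) = \<alpha> * k3 * (d - x)" for x
    using alpha_pos k3_pos by (simp add: d_def dd_def field_simps)
  have "e < d" using assms(2) alpha_k_pos(2) by (simp add: d_def dd_def)
  have "\<exists>x. e < x \<and> x < d \<and> f2 P a b c e x = g2 P e x"
  proof (rule crossing_exists)
    show "e \<le> d" using \<open>e < d\<close> by simp
    show "continuous_on {e..d} (f2 P a b c e)"
      unfolding f2_def arg using alpha_k_pos(2)
      by (intro continuous_on_compose2[OF H2_continuous[OF H2]] continuous_intros) auto
    show "continuous_on {e..d} (g2 P e)"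
      unfolding g2_def using assms(1) by (intro continuous_intros) auto
    show "g2 P e e < f2 P a b c e e"
      using mu2_pos[OF assms(2)] by (simp add: f2_def g2_def)
    show "f2 P a b c e d < g2 P e d"
      using mu2_0 alpha_Dc_pos[of 2] assms(1) \<open>e < d\<close> by (simp add: f2_def g2_def arg)
  qed
  then obtain x where "e < x" "x < d" "f2 P a b c e x = g2 P e x" by blast
  with assms(1) have "sol2 P a b c e x" by (simp add: sol2_def d_def)
  then show ?thesis ..
qed

section \<open>Steady-state profiles of each species\<close>

text \<open>In \<open>species1_ab\<close> and \<open>species2_ab\<close> the digits record whether the species is present in
  compartments 1 and 2 (\<open>i\<close> standing for the index \<open>j\<close> of the break-even root of \<open>\<mu>2\<close>); the
  type \<open>E_ab^cd\<close> of the paper pairs profile \<open>ac\<close> of species 1 with profile \<open>bd\<close> of species 2.\<close>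

definition species1_00 :: "real \<Rightarrow> real \<Rightarrow> real \<Rightarrow> real \<Rightarrow> bool" where
  "species1_00 S11 X11 S12 X12 \<longleftrightarrow> S11 = S1in \<and> X11 = 0 \<and> S12 = S1in \<and> X12 = 0"

definition species1_01 :: "real \<Rightarrow> real \<Rightarrow> real \<Rightarrow> real \<Rightarrow> bool" where
  "species1_01 S11 X11 S12 X12 \<longleftrightarrow> lam1 P 2 \<noteq> \<infinity> \<and> 0 < X12 \<and>
     S11 = S1in \<and> X11 = 0 \<and> S12 = l1 P 2 \<and> X12 = (S1in - l1 P 2) / (\<alpha> * k1)"

definition species1_11 :: "real \<Rightarrow> real \<Rightarrow> real \<Rightarrow> real \<Rightarrow> bool" where
  "species1_11 S11 X11 S12 X12 \<longleftrightarrow> lam1 P 1 < ereal S1in \<and>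
     S11 = l1 P 1 \<and> X11 = X11s P \<and> S12 = S1in - \<alpha> * k1 * X12s P \<and> X12 = X12s P"

lemma steady1_X11_nonzero:
  assumes "steady1 S11 X11 S12 X12" "X11 \<noteq> 0"
  shows "species1_11 S11 X11 S12 X12"
proof -
  from assms(1) have nonneg: "0 \<le> S11" "0 \<le> X11" "0 \<le> S12" "0 \<le> X12"
    and S11: "S11 = S1in - \<alpha> * k1 * X11" and S12: "S12 = S1in - \<alpha> * k1 * X12"
    and comp1: "(\<mu>1 S11 - \<alpha> * Dc P 1) * X11 = 0"
    and comp2: "\<mu>1 S12 * X12 = \<alpha> * Dc P 2 * (X12 - X11)"
    unfolding steady1_def by auto
  from assms(2) nonneg(2) have "0 < X11" by simp
  from assms(2) comp1 have "\<mu>1 S11 = \<alpha> * Dc P 1" by simp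
  then have lam: "lam1 P 1 = ereal S11" by (rule lam1_eqI[OF nonneg(1)])
  then have l1: "l1 P 1 = S11" by (simp add: l1_def)
  have "S11 < S1in" using S11 \<open>0 < X11\<close> alpha_pos k1_pos by simp
  with lam have below: "lam1 P 1 < ereal S1in" by simp
  have X11: "X11 = X11s P" using S11 l1 alpha_pos k1_pos by (simp add: X11s_def field_simps)
  have "0 < S11" using lam1_finite(2)[of 1] lam l1 by simp
  have "\<mu>1 S12 * X12 \<noteq> 0"
  proof
    assume "\<mu>1 S12 * X12 = 0"
    with comp2 alpha_pos Dc_pos[of 2] have "X12 = X11" by simp
    with S11 S12 have "S12 = S11" by simp
    with mu1_pos[OF \<open>0 < S11\<close>] \<open>0 < X11\<close> \<open>X12 = X11\<close> \<open>\<mu>1 S12 * X12 = 0\<close>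
    show False by simp
  qed
  then have "0 < S12" "0 < X12" using nonneg mu1_0 by (auto simp: le_less)
  then have "0 < \<mu>1 S12 * X12" using mu1_pos by simp
  with comp2 have "0 < \<alpha> * Dc P 2 * (X12 - X11)" by simp
  then have "0 < X12 - X11" using alpha_Dc_pos[of 2] by (rule zero_less_mult_pos)
  moreover have "\<alpha> * k1 * X12 < S1in" using S12 \<open>0 < S12\<close> by simp
  ultimately have "X12 = X12s P"
    using X12s_unique[OF below] X11 S12 comp2 by simp
  with below l1 X11 S12 show ?thesis by (simp add: species1_11_def)
qed

lemma steady1_iff:
  "steady1 S11 X11 S12 X12 \<longleftrightarrow>
     species1_00 S11 X11 S12 X12 \<or> species1_01 S11 X11 S12 X12 \<or> species1_11 S11 X11 S12 X12"
proof
  assume st: "steady1 S11 X11 S12 X12"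
  then have nonneg: "0 \<le> S12" "0 \<le> X12"
    and S11: "S11 = S1in - \<alpha> * k1 * X11" and S12: "S12 = S1in - \<alpha> * k1 * X12"
    and comp2: "\<mu>1 S12 * X12 = \<alpha> * Dc P 2 * (X12 - X11)"
    unfolding steady1_def by auto
  consider "X11 = 0" "X12 = 0" | "X11 = 0" "X12 \<noteq> 0" | "X11 \<noteq> 0" by blast
  then show "species1_00 S11 X11 S12 X12 \<or> species1_01 S11 X11 S12 X12 \<or> species1_11 S11 X11 S12 X12"
  proof cases
    case 1
    with S11 S12 show ?thesis by (simp add: species1_00_def)
  next
    case 2
    with comp2 have "\<mu>1 S12 = \<alpha> * Dc P 2" by simp
    then have "lam1 P 2 = ereal S12" by (rule lam1_eqI[OF nonneg(1)])
    moreover have "X12 = (S1in - S12) / (\<alpha> * k1)" using S12 alpha_pos k1_pos by (simp add: field_simps)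
    moreover have "0 < X12" using 2 nonneg(2) by simp
    ultimately have "species1_01 S11 X11 S12 X12"
      using 2 S11 by (simp add: species1_01_def l1_def)
    then show ?thesis by simp
  next
    case 3
    with st show ?thesis using steady1_X11_nonzero by blast
  qed
next
  assume "species1_00 S11 X11 S12 X12 \<or> species1_01 S11 X11 S12 X12 \<or> species1_11 S11 X11 S12 X12"
  then show "steady1 S11 X11 S12 X12"
  proof (elim disjE)
    assume "species1_00 S11 X11 S12 X12"
    then show ?thesis using S1in_pos by (simp add: species1_00_def steady1_def)
  next
    assume "species1_01 S11 X11 S12 X12"
    then have "lam1 P 2 \<noteq> \<infinity>" "0 < X12" "S11 = S1in" "X11 = 0" "S12 = l1 P 2"
      "\<alpha> * k1 * X12 = S1in - l1 P 2"
      using alpha_pos k1_pos by (auto simp: species1_01_def)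
    then show ?thesis
      using lam1_finite[of 2] S1in_pos by (simp add: steady1_def)
  next
    assume "species1_11 S11 X11 S12 X12"
    then have below: "lam1 P 1 < ereal S1in" and
      "S11 = l1 P 1" "X11 = X11s P" "S12 = S1in - \<alpha> * k1 * X12s P" "X12 = X12s P"
      by (auto simp: species1_11_def)
    moreover have "lam1 P 1 \<noteq> \<infinity>" using below by (simp add: lam1_less_iff)
    ultimately show ?thesis
      using lam1_finite[of 1] X11s_pos[OF below] X12s_solution[OF below] S1in_minus_X11s
      by (simp add: steady1_def)
  qed
qed

definition species2_00 :: "real \<Rightarrow> real \<Rightarrow> real \<Rightarrow> real \<Rightarrow> real \<Rightarrow> real \<Rightarrow> bool" where
  "species2_00 X11 X12 S21 X21 S22 X22 \<longleftrightarrow>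
     S21 = S2in + \<alpha> * k2 * X11 \<and> X21 = 0 \<and> S22 = S2in + \<alpha> * k2 * X12 \<and> X22 = 0"

definition species2_0i :: "nat \<Rightarrow> real \<Rightarrow> real \<Rightarrow> real \<Rightarrow> real \<Rightarrow> real \<Rightarrow> real \<Rightarrow> bool" where
  "species2_0i j X11 X12 S21 X21 S22 X22 \<longleftrightarrow> lam2 P 2 j \<noteq> \<infinity> \<and> 0 < X22 \<and>
     S21 = S2in + \<alpha> * k2 * X11 \<and> X21 = 0 \<and> S22 = l2 P 2 j \<and>
     X22 = (S2in + \<alpha> * k2 * X12 - l2 P 2 j) / (\<alpha> * k3)"

definition species2_i1 :: "nat \<Rightarrow> real \<Rightarrow> real \<Rightarrow> real \<Rightarrow> real \<Rightarrow> real \<Rightarrow> real \<Rightarrow> bool" where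
  "species2_i1 j X11 X12 S21 X21 S22 X22 \<longleftrightarrow> lam2 P 1 j \<noteq> \<infinity> \<and> 0 < X21 \<and>
     S21 = l2 P 1 j \<and> X21 = (S2in + \<alpha> * k2 * X11 - l2 P 1 j) / (\<alpha> * k3) \<and>
     sol2 P S21 X11 X12 X21 X22 \<and> S22 = S2in + \<alpha> * k2 * X12 - \<alpha> * k3 * X22"

lemma steady2_X21_nonzero:
  assumes "steady2 X11 X12 S21 X21 S22 X22" "X21 \<noteq> 0"
  shows "\<exists>j\<in>{1, 2}. species2_i1 j X11 X12 S21 X21 S22 X22"
proof -
  from assms(1) have nonneg: "0 \<le> S21" "0 \<le> X21" "0 \<le> S22" "0 \<le> X22"
    and S21: "S21 = S2in + \<alpha> * k2 * X11 - \<alpha> * k3 * X21"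
    and S22: "S22 = S2in + \<alpha> * k2 * X12 - \<alpha> * k3 * X22"
    and comp1: "(\<mu>2 S21 - \<alpha> * Dc P 1) * X21 = 0"
    and comp2: "\<mu>2 S22 * X22 = \<alpha> * Dc P 2 * (X22 - X21)"
    unfolding steady2_def by auto
  from assms(2) nonneg(2) have "0 < X21" by simp
  from assms(2) comp1 have "\<mu>2 S21 = \<alpha> * Dc P 1" by simp
  then obtain j where "j \<in> {1, 2}" "lam2 P 1 j \<noteq> \<infinity>" "l2 P 1 j = S21"
    using lam2_root[OF nonneg(1)] by blast
  moreover have "X21 = (S2in + \<alpha> * k2 * X11 - S21) / (\<alpha> * k3)"
    using S21 alpha_pos k3_pos by (simp add: field_simps)
  moreover have "0 < X22"
  proof (rule ccontr)
    assume "\<not> 0 < X22"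
    with nonneg(4) comp2 have "\<alpha> * Dc P 2 * X21 = 0" by simp
    with alpha_pos Dc_pos[of 2] \<open>0 < X21\<close> show False by simp
  qed
  moreover have "S21 - \<alpha> * k2 * (X11 - X12) + \<alpha> * k3 * (X21 - X22) = S22"
    using S21 S22 by (simp add: algebra_simps)
  ultimately have "species2_i1 j X11 X12 S21 X21 S22 X22"
    using \<open>0 < X21\<close> S22 nonneg(3) comp2 by (simp add: species2_i1_def sol2_iff)
  with \<open>j \<in> {1, 2}\<close> show ?thesis by blast
qed

lemma steady2_iff:
  assumes "0 \<le> X11" "0 \<le> X12"
  shows "steady2 X11 X12 S21 X21 S22 X22 \<longleftrightarrow> species2_00 X11 X12 S21 X21 S22 X22 \<or>
     (\<exists>j\<in>{1, 2}. species2_0i j X11 X12 S21 X21 S22 X22) \<or>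
     (\<exists>j\<in>{1, 2}. species2_i1 j X11 X12 S21 X21 S22 X22)"
    (is "_ \<longleftrightarrow> ?cases")
proof
  assume st: "steady2 X11 X12 S21 X21 S22 X22"
  then have nonneg: "0 \<le> S22" "0 \<le> X22"
    and S21: "S21 = S2in + \<alpha> * k2 * X11 - \<alpha> * k3 * X21"
    and S22: "S22 = S2in + \<alpha> * k2 * X12 - \<alpha> * k3 * X22"
    and comp2: "\<mu>2 S22 * X22 = \<alpha> * Dc P 2 * (X22 - X21)"
    unfolding steady2_def by auto
  consider "X21 = 0" "X22 = 0" | "X21 = 0" "X22 \<noteq> 0" | "X21 \<noteq> 0" by blast
  then show ?cases
  proof cases
    case 1
    with S21 S22 show ?thesis by (simp add: species2_00_def)
  next
    case 2
    with comp2 have "\<mu>2 S22 = \<alpha> * Dc P 2" by simp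
    then obtain j where "j \<in> {1, 2}" "lam2 P 2 j \<noteq> \<infinity>" "l2 P 2 j = S22"
      using lam2_root[OF nonneg(1)] by blast
    moreover have "X22 = (S2in + \<alpha> * k2 * X12 - S22) / (\<alpha> * k3)"
      using S22 alpha_pos k3_pos by (simp add: field_simps)
    moreover have "0 < X22" using 2 nonneg(2) by simp
    ultimately have "species2_0i j X11 X12 S21 X21 S22 X22"
      using 2 S21 by (simp add: species2_0i_def)
    with \<open>j \<in> {1, 2}\<close> show ?thesis by blast
  next
    case 3
    with st show ?thesis using steady2_X21_nonzero by blast
  qed
next
  assume ?cases
  then show "steady2 X11 X12 S21 X21 S22 X22"
  proof (elim disjE bexE)
    assume "species2_00 X11 X12 S21 X21 S22 X22"
    then show ?thesis using assms S2in_pos alpha_pos k2_pos by (simp add: species2_00_def steady2_def)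
  next
    fix j assume "species2_0i j X11 X12 S21 X21 S22 X22"
    then have "lam2 P 2 j \<noteq> \<infinity>" "0 < X22" "S21 = S2in + \<alpha> * k2 * X11" "X21 = 0" "S22 = l2 P 2 j"
      "\<alpha> * k3 * X22 = S2in + \<alpha> * k2 * X12 - l2 P 2 j"
      using alpha_pos k3_pos by (auto simp: species2_0i_def)
    then show ?thesis
      using lam2_finite[of 2 j] assms S2in_pos alpha_pos k2_pos by (simp add: steady2_def)
  next
    fix j assume "species2_i1 j X11 X12 S21 X21 S22 X22"
    then have "lam2 P 1 j \<noteq> \<infinity>" "0 < X21" and S21: "S21 = l2 P 1 j"
      and X21: "\<alpha> * k3 * X21 = S2in + \<alpha> * k2 * X11 - l2 P 1 j" and "sol2 P S21 X11 X12 X21 X22"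
      and S22: "S22 = S2in + \<alpha> * k2 * X12 - \<alpha> * k3 * X22"
      using alpha_pos k3_pos by (auto simp: species2_i1_def)
    moreover have "S21 - \<alpha> * k2 * (X11 - X12) + \<alpha> * k3 * (X21 - X22) = S22"
      using S21 X21 S22 by (simp add: algebra_simps)
    ultimately show ?thesis
      using lam2_finite[of 1 j] by (simp add: steady2_def sol2_iff)
  qed
qed

section \<open>The nine types\<close>

lemma alpha_k2_X1_eq: "\<alpha> * k2 * (s / (\<alpha> * k1)) = k2 / k1 * s"
  using alpha_pos by simp

lemma FF_biomass:
  assumes "lam1 P i \<noteq> \<infinity>" "lam2 P i j \<noteq> \<infinity>"
  shows "k2 * (S1in - real_of_ereal (FF P i j)) / (\<alpha> * k1 * k3) =
     (S2in + \<alpha> * k2 * ((S1in - l1 P i) / (\<alpha> * k1)) - l2 P i j) / (\<alpha> * k3)"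
  using alpha_pos k1_pos k2_pos k3_pos by (simp add: FF_finite[OF assms] field_simps)

lemma E00_00_iff:
  "E00_00 P (S11, X11, S21, X21, S12, X12, S22, X22) \<longleftrightarrow>
     species1_00 S11 X11 S12 X12 \<and> species2_00 X11 X12 S21 X21 S22 X22"
  by (auto simp: E00_00_def species1_00_def species2_00_def)

lemma E00_0i_iff:
  "E00_0i P j (S11, X11, S21, X21, S12, X12, S22, X22) \<longleftrightarrow>
     species1_00 S11 X11 S12 X12 \<and> species2_0i j X11 X12 S21 X21 S22 X22"
  by (auto simp: E00_0i_def species1_00_def species2_0i_def Let_def)

lemma E00_10_iff:
  "E00_10 P (S11, X11, S21, X21, S12, X12, S22, X22) \<longleftrightarrow>
     species1_01 S11 X11 S12 X12 \<and> species2_00 X11 X12 S21 X21 S22 X22"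
  by (auto simp: E00_10_def species1_01_def species2_00_def Let_def alpha_k2_X1_eq)

lemma E00_1i_iff:
  "E00_1i P j (S11, X11, S21, X21, S12, X12, S22, X22) \<longleftrightarrow>
     species1_01 S11 X11 S12 X12 \<and> species2_0i j X11 X12 S21 X21 S22 X22"
proof (cases "lam1 P 2 \<noteq> \<infinity> \<and> lam2 P 2 j \<noteq> \<infinity>")
  case True
  then show ?thesis
    unfolding E00_1i_def Let_def FF_biomass[of 2 j, OF True[THEN conjunct1] True[THEN conjunct2]]
    by (auto simp: species1_01_def species2_0i_def)
qed (auto simp: E00_1i_def species1_01_def species2_0i_def)

lemma E10_10_iff:
  "E10_10 P (S11, X11, S21, X21, S12, X12, S22, X22) \<longleftrightarrow>
     species1_11 S11 X11 S12 X12 \<and> species2_00 X11 X12 S21 X21 S22 X22"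
  using X11s_pos X12s_solution(1)
  by (auto simp: E10_10_def species1_11_def species2_00_def X11s_def alpha_k2_X1_eq lam1_less_iff)

lemma E10_1i_iff:
  "E10_1i P j (S11, X11, S21, X21, S12, X12, S22, X22) \<longleftrightarrow>
     species1_11 S11 X11 S12 X12 \<and> species2_0i j X11 X12 S21 X21 S22 X22"
  using X11s_pos X12s_solution(1)
  by (auto simp: E10_1i_def species1_11_def species2_0i_def Let_def X11s_def alpha_k2_X1_eq
      lam1_less_iff phi_finite)

lemma E0i_01_iff:
  "E0i_01 P j (S11, X11, S21, X21, S12, X12, S22, X22) \<longleftrightarrow>
     species1_00 S11 X11 S12 X12 \<and> species2_i1 j X11 X12 S21 X21 S22 X22"
  by (auto simp: E0i_01_def species1_00_def species2_i1_def Let_def)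

lemma E0i_11_iff:
  "E0i_11 P j (S11, X11, S21, X21, S12, X12, S22, X22) \<longleftrightarrow>
     species1_01 S11 X11 S12 X12 \<and> species2_i1 j X11 X12 S21 X21 S22 X22"
  by (auto simp: E0i_11_def species1_01_def species2_i1_def Let_def alpha_k2_X1_eq)

lemma E1i_11_iff:
  "E1i_11 P j (S11, X11, S21, X21, S12, X12, S22, X22) \<longleftrightarrow>
     species1_11 S11 X11 S12 X12 \<and> species2_i1 j X11 X12 S21 X21 S22 X22"
proof (cases "lam1 P 1 \<noteq> \<infinity> \<and> lam2 P 1 j \<noteq> \<infinity>")
  case True
  then show ?thesis
    unfolding E1i_11_def Let_def FF_biomass[of 1 j, OF True[THEN conjunct1] True[THEN conjunct2]]
      X11s_def[symmetric]
    using X11s_pos X12s_solution(1) by (auto simp: species1_11_def species2_i1_def lam1_less_iff)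
qed (auto simp: E1i_11_def species1_11_def species2_i1_def lam1_less_iff)

lemma steady_iff_species:
  "steady P (S11, X11, S21, X21, S12, X12, S22, X22) \<longleftrightarrow>
     (species1_00 S11 X11 S12 X12 \<or> species1_01 S11 X11 S12 X12 \<or> species1_11 S11 X11 S12 X12) \<and>
     (species2_00 X11 X12 S21 X21 S22 X22 \<or> (\<exists>j\<in>{1, 2}. species2_0i j X11 X12 S21 X21 S22 X22) \<or>
      (\<exists>j\<in>{1, 2}. species2_i1 j X11 X12 S21 X21 S22 X22))"
proof -
  have "steady1 S11 X11 S12 X12 \<Longrightarrow> 0 \<le> X11 \<and> 0 \<le> X12" by (simp add: steady1_def)
  then show ?thesis
    unfolding steady_iff_steady12 by (metis steady1_iff steady2_iff)
qed

lemma steady_iff_types: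
  "steady P \<xi> \<longleftrightarrow>
     E00_00 P \<xi> \<or> (\<exists>i\<in>{1, 2}. E00_0i P i \<xi>) \<or> E00_10 P \<xi> \<or>
     (\<exists>i\<in>{1, 2}. E00_1i P i \<xi>) \<or> E10_10 P \<xi> \<or> (\<exists>i\<in>{1, 2}. E10_1i P i \<xi>) \<or>
     (\<exists>i\<in>{1, 2}. E0i_01 P i \<xi>) \<or> (\<exists>i\<in>{1, 2}. E0i_11 P i \<xi>) \<or>
     (\<exists>i\<in>{1, 2}. E1i_11 P i \<xi>)"
proof -
  obtain S11 X11 S21 X21 S12 X12 S22 X22 where \<xi>: "\<xi> = (S11, X11, S21, X21, S12, X12, S22, X22)"
    by (metis prod.exhaust)
  show ?thesis
    unfolding \<xi> steady_iff_species E00_00_iff E00_0i_iff E00_10_iff E00_1i_iff E10_10_iff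
      E10_1i_iff E0i_01_iff E0i_11_iff E1i_11_iff
    by blast
qed

lemma ex_E00_00: "\<exists>\<xi>. steady P \<xi> \<and> E00_00 P \<xi>"
proof -
  have "E00_00 P (S1in, 0, S2in, 0, S1in, 0, S2in, 0)" by (simp add: E00_00_def)
  then show ?thesis using steady_iff_types[THEN iffD2] by blast
qed

lemma ex_E00_0i:
  assumes "i \<in> {1, 2}"
  shows "(\<exists>\<xi>. steady P \<xi> \<and> E00_0i P i \<xi>) \<longleftrightarrow> lam2 P 2 i < ereal S2in"
proof -
  have "(\<exists>\<xi>. steady P \<xi> \<and> E00_0i P i \<xi>) \<longleftrightarrow> (\<exists>\<xi>. E00_0i P i \<xi>)"
    using assms by (blast intro: steady_iff_types[THEN iffD2])
  also have "\<dots> \<longleftrightarrow> lam2 P 2 i < ereal S2in"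
    using alpha_k_pos by (auto simp: E00_0i_def Let_def lam2_less_iff pos_less_divide_eq)
  finally show ?thesis .
qed

lemma ex_E00_10: "(\<exists>\<xi>. steady P \<xi> \<and> E00_10 P \<xi>) \<longleftrightarrow> lam1 P 2 < ereal S1in"
proof -
  have "(\<exists>\<xi>. steady P \<xi> \<and> E00_10 P \<xi>) \<longleftrightarrow> (\<exists>\<xi>. E00_10 P \<xi>)"
    by (blast intro: steady_iff_types[THEN iffD2])
  also have "\<dots> \<longleftrightarrow> lam1 P 2 < ereal S1in"
    using alpha_k_pos by (auto simp: E00_10_def Let_def lam1_less_iff pos_less_divide_eq)
  finally show ?thesis .
qed

lemma ex_E00_1i:
  assumes "i \<in> {1, 2}"
  shows "(\<exists>\<xi>. steady P \<xi> \<and> E00_1i P i \<xi>) \<longleftrightarrow> max (lam1 P 2) (FF P 2 i) < ereal S1in"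
proof -
  have "(\<exists>\<xi>. steady P \<xi> \<and> E00_1i P i \<xi>) \<longleftrightarrow> (\<exists>\<xi>. E00_1i P i \<xi>)"
    using assms by (blast intro: steady_iff_types[THEN iffD2])
  also have "\<dots> \<longleftrightarrow> max (lam1 P 2) (FF P 2 i) < ereal S1in"
    using alpha_k_pos k2_pos
    by (auto simp: E00_1i_def Let_def lam1_less_iff FF_less_iff FF_finite pos_less_divide_eq
        zero_less_mult_iff)
  finally show ?thesis .
qed

lemma ex_E10_10: "(\<exists>\<xi>. steady P \<xi> \<and> E10_10 P \<xi>) \<longleftrightarrow> lam1 P 1 < ereal S1in"
proof -
  have "(\<exists>\<xi>. steady P \<xi> \<and> E10_10 P \<xi>) \<longleftrightarrow> (\<exists>\<xi>. E10_10 P \<xi>)"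
    by (blast intro: steady_iff_types[THEN iffD2])
  also have "\<dots> \<longleftrightarrow> lam1 P 1 < ereal S1in"
    using X11s_pos X12s_solution(1) by (auto simp: E10_10_def lam1_less_iff)
  finally show ?thesis .
qed

lemma ex_E10_1i:
  assumes "i \<in> {1, 2}"
  shows "(\<exists>\<xi>. steady P \<xi> \<and> E10_1i P i \<xi>) \<longleftrightarrow> lam1 P 1 < ereal S1in \<and> 0 < phi P i"
proof -
  have "(\<exists>\<xi>. steady P \<xi> \<and> E10_1i P i \<xi>) \<longleftrightarrow> (\<exists>\<xi>. E10_1i P i \<xi>)"
    using assms by (blast intro: steady_iff_types[THEN iffD2])
  also have "\<dots> \<longleftrightarrow> lam1 P 1 < ereal S1in \<and> 0 < phi P i"
    using X11s_pos X12s_solution(1) alpha_k_pos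
    by (auto simp: E10_1i_def Let_def lam1_less_iff phi_pos_iff phi_finite pos_less_divide_eq)
  finally show ?thesis .
qed

lemma ex_E0i_01:
  assumes "i \<in> {1, 2}"
  shows "(\<exists>\<xi>. steady P \<xi> \<and> E0i_01 P i \<xi>) \<longleftrightarrow> lam2 P 1 i < ereal S2in"
proof -
  have "(\<exists>\<xi>. steady P \<xi> \<and> E0i_01 P i \<xi>) \<longleftrightarrow> (\<exists>\<xi>. E0i_01 P i \<xi>)"
    using assms by (blast intro: steady_iff_types[THEN iffD2])
  also have "\<dots> \<longleftrightarrow> lam2 P 1 i < ereal S2in"
  proof
    assume "\<exists>\<xi>. E0i_01 P i \<xi>"
    then show "lam2 P 1 i < ereal S2in"
      using alpha_k_pos by (auto simp: E0i_01_def Let_def lam2_less_iff pos_less_divide_eq)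
  next
    define X21 where "X21 = (S2in - l2 P 1 i) / (\<alpha> * k3)"
    assume "lam2 P 1 i < ereal S2in"
    then have fin: "lam2 P 1 i \<noteq> \<infinity>" and "0 < X21"
      using alpha_k_pos by (simp_all add: lam2_less_iff X21_def pos_less_divide_eq)
    moreover obtain x where "sol2 P (l2 P 1 i) 0 0 X21 x"
      using sol2_exists[OF \<open>0 < X21\<close>, of "l2 P 1 i" 0 0] lam2_finite(2)[OF fin] by auto
    ultimately show "\<exists>\<xi>. E0i_01 P i \<xi>"
      unfolding E0i_01_def Let_def X21_def[symmetric] by blast
  qed
  finally show ?thesis .
qed

lemma ex_E0i_11:
  assumes "i \<in> {1, 2}"
  shows "(\<exists>\<xi>. steady P \<xi> \<and> E0i_11 P i \<xi>) \<longleftrightarrow> lam1 P 2 < ereal S1in \<and> lam2 P 1 i < ereal S2in"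
proof -
  have "(\<exists>\<xi>. steady P \<xi> \<and> E0i_11 P i \<xi>) \<longleftrightarrow> (\<exists>\<xi>. E0i_11 P i \<xi>)"
    using assms by (blast intro: steady_iff_types[THEN iffD2])
  also have "\<dots> \<longleftrightarrow> lam1 P 2 < ereal S1in \<and> lam2 P 1 i < ereal S2in"
  proof
    assume "\<exists>\<xi>. E0i_11 P i \<xi>"
    then show "lam1 P 2 < ereal S1in \<and> lam2 P 1 i < ereal S2in"
      using alpha_k_pos
      by (auto simp: E0i_11_def Let_def lam1_less_iff lam2_less_iff pos_less_divide_eq)
  next
    define X21 X12 where "X21 = (S2in - l2 P 1 i) / (\<alpha> * k3)" and "X12 = (S1in - l1 P 2) / (\<alpha> * k1)"
    assume "lam1 P 2 < ereal S1in \<and> lam2 P 1 i < ereal S2in"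
    then have fin: "lam1 P 2 \<noteq> \<infinity>" "lam2 P 1 i \<noteq> \<infinity>" and "0 < X21" "0 < X12"
      using alpha_k_pos
      by (simp_all add: lam1_less_iff lam2_less_iff X21_def X12_def pos_less_divide_eq)
    moreover have "0 < l2 P 1 i - \<alpha> * k2 * (0 - X12)"
      using lam2_finite(2)[OF fin(2)] mult_pos_pos[OF mult_pos_pos[OF alpha_pos k2_pos] \<open>0 < X12\<close>]
      by simp
    then obtain x where "sol2 P (l2 P 1 i) 0 X12 X21 x"
      using sol2_exists[OF \<open>0 < X21\<close>] by blast
    ultimately show "\<exists>\<xi>. E0i_11 P i \<xi>"
      unfolding E0i_11_def Let_def X21_def[symmetric] X12_def[symmetric] by blast
  qed
  finally show ?thesis .
qed

lemma ex_E1i_11: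
  assumes "i \<in> {1, 2}"
  shows "(\<exists>\<xi>. steady P \<xi> \<and> E1i_11 P i \<xi>) \<longleftrightarrow> max (lam1 P 1) (FF P 1 i) < ereal S1in"
proof -
  have "(\<exists>\<xi>. steady P \<xi> \<and> E1i_11 P i \<xi>) \<longleftrightarrow> (\<exists>\<xi>. E1i_11 P i \<xi>)"
    using assms by (blast intro: steady_iff_types[THEN iffD2])
  also have "\<dots> \<longleftrightarrow> max (lam1 P 1) (FF P 1 i) < ereal S1in"
  proof
    assume "\<exists>\<xi>. E1i_11 P i \<xi>"
    then show "max (lam1 P 1) (FF P 1 i) < ereal S1in"
      using alpha_k_pos k2_pos
      by (auto simp: E1i_11_def Let_def FF_less_iff FF_finite pos_less_divide_eq zero_less_mult_iff)
  next
    define X21 where "X21 = k2 * (S1in - real_of_ereal (FF P 1 i)) / (\<alpha> * k1 * k3)"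
    assume "max (lam1 P 1) (FF P 1 i) < ereal S1in"
    then have below: "lam1 P 1 < ereal S1in" and fin: "lam2 P 1 i \<noteq> \<infinity>" and "0 < X21"
      using alpha_k_pos k2_pos
      by (auto simp: X21_def FF_less_iff FF_finite pos_less_divide_eq)
    moreover have "0 < l2 P 1 i - \<alpha> * k2 * (X11s P - X12s P)"
      using lam2_finite(2)[OF fin] mult_pos_neg[OF mult_pos_pos[OF alpha_pos k2_pos], of "X11s P - X12s P"]
        X12s_solution(1)[OF below]
      by simp
    then obtain x where "sol2 P (l2 P 1 i) (X11s P) (X12s P) X21 x"
      using sol2_exists[OF \<open>0 < X21\<close>] by blast
    ultimately show "\<exists>\<xi>. E1i_11 P i \<xi>"
      using X11s_pos[OF below] X12s_solution(1)[OF below]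
      unfolding E1i_11_def Let_def X21_def[symmetric] by (auto simp: lam1_less_iff)
  qed
  finally show ?thesis .
qed

end

theorem proposition2:
  fixes P :: chemo
  assumes "pD P > 0" and "0 < pr P" and "pr P < 1"
    and "0 < palpha P" and "palpha P < 1"
    and "pk1 P > 0" and "pk2 P > 0" and "pk3 P > 0"
    and "pS1in P > 0" and "pS2in P > 0"
    and "H1 (pmu1 P) (pm1 P)" and "H2 (pmu2 P) (pS2m P)"
  shows "(\<forall>\<xi>. steady P \<xi> \<longrightarrow>
            E00_00 P \<xi> \<or> (\<exists>i\<in>{1,2}. E00_0i P i \<xi>) \<or> E00_10 P \<xi> \<or>
            (\<exists>i\<in>{1,2}. E00_1i P i \<xi>) \<or> E10_10 P \<xi> \<or> (\<exists>i\<in>{1,2}. E10_1i P i \<xi>) \<or>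
            (\<exists>i\<in>{1,2}. E0i_01 P i \<xi>) \<or> (\<exists>i\<in>{1,2}. E0i_11 P i \<xi>) \<or>
            (\<exists>i\<in>{1,2}. E1i_11 P i \<xi>))
       \<and> (\<exists>\<xi>. steady P \<xi> \<and> E00_00 P \<xi>)
       \<and> (\<forall>i\<in>{1,2}. (\<exists>\<xi>. steady P \<xi> \<and> E00_0i P i \<xi>) \<longleftrightarrow> ereal (pS2in P) > lam2 P 2 i)
       \<and> ((\<exists>\<xi>. steady P \<xi> \<and> E00_10 P \<xi>) \<longleftrightarrow> ereal (pS1in P) > lam1 P 2)
       \<and> (\<forall>i\<in>{1,2}. (\<exists>\<xi>. steady P \<xi> \<and> E00_1i P i \<xi>) \<longleftrightarrow>
            ereal (pS1in P) > max (lam1 P 2) (FF P 2 i))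
       \<and> ((\<exists>\<xi>. steady P \<xi> \<and> E10_10 P \<xi>) \<longleftrightarrow> ereal (pS1in P) > lam1 P 1)
       \<and> (\<forall>i\<in>{1,2}. (\<exists>\<xi>. steady P \<xi> \<and> E10_1i P i \<xi>) \<longleftrightarrow>
            ereal (pS1in P) > lam1 P 1 \<and> phi P i > 0)
       \<and> (\<forall>i\<in>{1,2}. (\<exists>\<xi>. steady P \<xi> \<and> E0i_01 P i \<xi>) \<longleftrightarrow> ereal (pS2in P) > lam2 P 1 i)
       \<and> (\<forall>i\<in>{1,2}. (\<exists>\<xi>. steady P \<xi> \<and> E0i_11 P i \<xi>) \<longleftrightarrow>
            ereal (pS1in P) > lam1 P 2 \<and> ereal (pS2in P) > lam2 P 1 i)
       \<and> (\<forall>i\<in>{1,2}. (\<exists>\<xi>. steady P \<xi> \<and> E1i_11 P i \<xi>) \<longleftrightarrow>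
            ereal (pS1in P) > max (lam1 P 1) (FF P 1 i))"
proof -
  interpret chemostat P
    by unfold_locales (use assms in auto)
  show ?thesis
    using ex_E00_00 ex_E00_0i ex_E00_10 ex_E00_1i ex_E10_10 ex_E10_1i ex_E0i_01 ex_E0i_11 ex_E1i_11
    by (intro conjI allI impI ballI; simp only: steady_iff_types[symmetric])
qed

end
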